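(* In the setting described in the context, for any $c>0$, with probability $1-m^{-\omega(1)}$, $$f(c)\le-\frac15m^{-3/2}q^{1/2}\Delta^2+\frac{m}{\sqrt q}\log m.$$
   Context: Two agents $a,b$, $m$ items, unknown utilities $u^a_i,u^b_i\in[0,1]$, additive. For an allocation (partition $(\mathcal{A}_a,\mathcal{A}_b)$ of $[m]$), $\mathrm{Envy}_{a\to b}=\sum_{i\in\mathcal{A}_b}u^a_i-\sum_{i\in\mathcal{A}_a}u^a_i$, $\mathrm{Envy}_{b\to a}=\sum_{i\in\mathcal{A}_a}u^b_i-\sum_{i\in\mathcal{A}_b}u^b_i$, $\mathrm{Envy}=\max$ of the two; assume $\min_{\mathcal{A}}\mathrm{Envy}(\mathcal{A})\le-\Delta$, with $\Delta=\Delta(m)$, $\Delta\ge m^{1/4}\log^2m$, $\Delta=o(m/\log m)$. Noise variance is $\sigma^2=1$ and $q=m\lceil15\frac{m^{3/2}}{\Delta^2}\log m+\log^2m\rceil$. Each item $i$ is queried $q/m$ times, each query returning independent $y^a\sim N(u^a_i,1)$, $y^b\sim N(u^b_i,1)$, and $v^\nu_i$ is the average of agent $\nu$'s observations for item $i$ (so $v^\nu_i\sim N(u^\nu_i,m/q)$, all independent). For $c>0$, $x_i(c)=1$ if $cv^a_i>v^b_i$ and $x_i(c)=-1$ otherwise; $e_a(c)=-\sum_ix_i(c)u^a_i$, $e_b(c)=\sum_ix_i(c)u^b_i$; and $f(c)=\frac{ce_a(c)+e_b(c)}{1+c}$. The term $m^{-\omega(1)}$ denotes a quantity decaying faster than any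 polynomial in $m$. $\log$ is natural. *)

theory Defs
  imports "HOL-Probability.Probability" "HOL-Library.Landau_Symbols"
begin

text \<open>Items are indexed by {..<m}. An allocation is encoded by the set A of items
  given to agent a (agent b receives {..<m} - A).\<close>

definition envy_ab :: "nat \<Rightarrow> (nat \<Rightarrow> real) \<Rightarrow> nat set \<Rightarrow> real" where
  "envy_ab m ua A = (\<Sum>i\<in>{..<m} - A. ua i) - (\<Sum>i\<in>A. ua i)"

definition envy_ba :: "nat \<Rightarrow> (nat \<Rightarrow> real) \<Rightarrow> nat set \<Rightarrow> real" where
  "envy_ba m ub A = (\<Sum>i\<in>A. ub i) - (\<Sum>i\<in>{..<m} - A. ub i)"

definition envy :: "nat \<Rightarrow> (nat \<Rightarrow> real) \<Rightarrow> (nat \<Rightarrow> real) \<Rightarrow> nat set \<Rightarrow> real" where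
  "envy m ua ub A = max (envy_ab m ua A) (envy_ba m ub A)"

definition num_queries :: "nat \<Rightarrow> real \<Rightarrow> nat" where
  "num_queries m D = m * nat \<lceil>15 * real m powr (3/2) / D\<^sup>2 * ln (real m) + (ln (real m))\<^sup>2\<rceil>"

definition xsel :: "real \<Rightarrow> (nat \<Rightarrow> real) \<Rightarrow> (nat \<Rightarrow> real) \<Rightarrow> nat \<Rightarrow> real" where
  "xsel c va vb i = (if c * va i > vb i then 1 else -1)"

definition e_a :: "nat \<Rightarrow> (nat \<Rightarrow> real) \<Rightarrow> real \<Rightarrow> (nat \<Rightarrow> real) \<Rightarrow> (nat \<Rightarrow> real) \<Rightarrow> real" where
  "e_a m ua c va vb = - (\<Sum>i<m. xsel c va vb i * ua i)"

definition e_b :: "nat \<Rightarrow> (nat \<Rightarrow> real) \<Rightarrow> real \<Rightarrow> (nat \<Rightarrow> real) \<Rightarrow> (nat \<Rightarrow> real) \<Rightarrow> real" where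
  "e_b m ub c va vb = (\<Sum>i<m. xsel c va vb i * ub i)"

definition f_c :: "nat \<Rightarrow> (nat \<Rightarrow> real) \<Rightarrow> (nat \<Rightarrow> real) \<Rightarrow> real \<Rightarrow> (nat \<Rightarrow> real) \<Rightarrow> (nat \<Rightarrow> real) \<Rightarrow> real" where
  "f_c m ua ub c va vb = (c * e_a m ua c va vb + e_b m ub c va vb) / (1 + c)"

text \<open>Joint law of the averaged observations: v^a_i ~ N(u^a_i, m/q), v^b_i ~ N(u^b_i, m/q),
  all independent (second argument of normal_density is the standard deviation).\<close>
definition obs_measure :: "nat \<Rightarrow> real \<Rightarrow> (nat \<Rightarrow> real) \<Rightarrow> (nat \<Rightarrow> real) \<Rightarrow> ((nat \<Rightarrow> real) \<times> (nat \<Rightarrow> real)) measure" where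
  "obs_measure m D ua ub =
     (let s = sqrt (real m / real (num_queries m D)) in
      (\<Pi>\<^sub>M i\<in>{..<m}. density lborel (normal_density (ua i) s)) \<Otimes>\<^sub>M
      (\<Pi>\<^sub>M i\<in>{..<m}. density lborel (normal_density (ub i) s)))"

text \<open>g(m) = m^(-omega(1)): decays faster than any polynomial.\<close>
definition superpoly_small :: "(nat \<Rightarrow> real) \<Rightarrow> bool" where
  "superpoly_small g \<longleftrightarrow> (\<forall>k::nat. (\<lambda>m. real m ^ k * g m) \<longlonglongrightarrow> 0)"

end

(*
  Write d_i = c u^a_i - u^b_i and s = sqrt (m/q). Then f(c) = sum_i x_i (-d_i)/(1+c), and x_i has the
  sign of d_i unless the noise Z_i = c (v^a_i - u^a_i) - (v^b_i - u^b_i), a centred Gaussian with standard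
  deviation sigma = s sqrt (1 + c^2), pushes c v^a_i - v^b_i across zero.

  A Chernoff bound with parameter eta factorises over the items. Each factor is a two-point mean whose
  wrong-sign probability is at most the Gaussian tail R_i at |d_i|; Chebyshev gives R_i <= sigma^2/d_i^2,
  and the mass of the central interval gives 1 - 2 R_i >= min (|d_i|/sigma, 1)/5. So each factor is at most
  exp (- eta |d_i| min (|d_i|/sigma, 1) / (5 (1+c)) + 4 eta^2 s^2). The envy gap forces
  sum_i |d_i| >= (1+c) Delta, and the tangent bound t min (t/sigma, 1) >= 2 theta t - theta^2 sigma turns
  this into a drift of at least Delta^2 / (5 m s). For eta = log m / (8 sqrt m s) the exponent is exactly
  -(log m)^2/16, and exp (-(log m)^2/16) = m^(-omega(1)).
*)

theory Submission
  imports Defs "HOL-Real_Asymp.Real_Asymp"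
begin

section \<open>Gaussian tails\<close>

definition normal_tail :: "real \<Rightarrow> real \<Rightarrow> real" where
  "normal_tail \<sigma> t = measure (density lborel (normal_density 0 \<sigma>)) {t..}"

lemma measure_normal_lower_tail:
  "measure (density lborel (normal_density 0 \<sigma>)) {..-t} = normal_tail \<sigma> t"
proof -
  have "emeasure (density lborel (normal_density 0 \<sigma>)) {..-t}
      = (\<integral>\<^sup>+x. ennreal (normal_density 0 \<sigma> x) * indicator {..-t} x \<partial>lborel)"
    by (simp add: emeasure_density)
  also have "\<dots> = ennreal \<bar>-1\<bar> *
      (\<integral>\<^sup>+x. ennreal (normal_density 0 \<sigma> (0 + -1 * x)) * indicator {..-t} (0 + -1 * x) \<partial>lborel)"
    by (rule nn_integral_real_affine) auto
  also have "\<dots> = (\<integral>\<^sup>+x. ennreal (normal_density 0 \<sigma> x) * indicator {t..} x \<partial>lborel)"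
    by (auto intro!: nn_integral_cong simp: normal_density_def split: split_indicator)
  also have "\<dots> = emeasure (density lborel (normal_density 0 \<sigma>)) {t..}"
    by (simp add: emeasure_density)
  finally show ?thesis
    by (simp only: normal_tail_def measure_def)
qed

lemma normal_tail_le:
  assumes "\<sigma> > 0" "t > 0"
  shows "normal_tail \<sigma> t \<le> \<sigma>\<^sup>2 / t\<^sup>2"
proof -
  let ?N = "density lborel (normal_density 0 \<sigma>)"
  interpret N: prob_space ?N
    using assms(1) by (rule prob_space_normal_density)
  have "distr ?N lborel (\<lambda>x. x) = distr ?N ?N (\<lambda>x. x)"
    by (rule distr_cong) auto
  then have id: "distributed ?N lborel (\<lambda>x. x) (normal_density 0 \<sigma>)"
    by (simp add: distributed_def distr_id)
  have "integrable ?N (\<lambda>x. x\<^sup>2)"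
    by (subst integrable_density) (use integrable_normal_moment[where k=2 and \<mu>=0] assms in auto)
  have "normal_tail \<sigma> t \<le> N.prob {x \<in> space ?N. \<bar>x - N.expectation (\<lambda>x. x)\<bar> \<ge> t}"
    unfolding normal_tail_def N.normal_distributed_expectation[OF assms(1) id]
    by (intro N.finite_measure_mono) auto
  also have "\<dots> \<le> N.variance (\<lambda>x. x) / t\<^sup>2"
    using assms \<open>integrable ?N (\<lambda>x. x\<^sup>2)\<close> by (intro N.Chebyshev_inequality) auto
  finally show ?thesis
    using N.normal_distributed_variance[OF assms(1) id] by simp
qed

lemma exp_neg_half_div_sqrt_two_pi_ge: "1/5 \<le> exp (-1/2) / sqrt (2 * pi)"
proof -
  have "exp (1/2::real) ^ 2 \<le> (5/3) ^ 2"
    using e_less_272 by (simp add: power2_eq_square mult_exp_exp)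
  then have "exp (1/2::real) \<le> 5/3"
    by (rule power2_le_imp_le) simp
  then have "3/5 \<le> exp (-1/2::real)"
    by (simp add: exp_minus field_simps)
  moreover have "sqrt (2 * pi) \<le> 3"
    using pi_less_4 by (simp add: real_sqrt_le_iff[of _ 9, simplified])
  ultimately show ?thesis
    by (simp add: field_simps)
qed

lemma measure_normal_center_ge:
  assumes "\<sigma> > 0" "t > 0"
  shows "min (t / \<sigma>) 1 / 5 \<le> measure (density lborel (normal_density 0 \<sigma>)) {-t<..<t}"
proof -
  let ?N = "density lborel (normal_density 0 \<sigma>)"
  interpret N: prob_space ?N
    using assms(1) by (rule prob_space_normal_density)
  define a where "a = min t \<sigma>"
  have density_ge: "1 / (5 * \<sigma>) \<le> normal_density 0 \<sigma> x" if "x \<in> {0<..<a}" for x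
  proof -
    have "x\<^sup>2 \<le> \<sigma>\<^sup>2"
      using that by (intro power_mono) (auto simp: a_def)
    have "1 / (5 * \<sigma>) \<le> exp (-1/2) / sqrt (2 * pi) / \<sigma>"
      using divide_right_mono[OF exp_neg_half_div_sqrt_two_pi_ge, of \<sigma>] assms(1) by simp
    also have "\<dots> \<le> normal_density 0 \<sigma> x"
      using \<open>x\<^sup>2 \<le> \<sigma>\<^sup>2\<close> assms(1) by (auto simp: normal_density_def real_sqrt_mult field_simps)
    finally show ?thesis .
  qed
  have "ennreal (min (t / \<sigma>) 1 / 5) = ennreal (1 / (5 * \<sigma>)) * emeasure lborel {0<..<a}"
    using assms by (auto simp: a_def min_def field_simps ennreal_mult[symmetric])
  also have "\<dots> = (\<integral>\<^sup>+x. ennreal (1 / (5 * \<sigma>)) * indicator {0<..<a} x \<partial>lborel)"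
    by (rule nn_integral_cmult_indicator[symmetric]) auto
  also have "\<dots> \<le> (\<integral>\<^sup>+x. ennreal (normal_density 0 \<sigma> x) * indicator {-t<..<t} x \<partial>lborel)"
    using density_ge by (intro nn_integral_mono) (auto simp: a_def split: split_indicator)
  also have "\<dots> = emeasure ?N {-t<..<t}"
    by (simp add: emeasure_density)
  finally show ?thesis
    by (simp add: N.emeasure_eq_measure)
qed

lemma normal_tail_twice_add_center_le:
  assumes "\<sigma> > 0" "t > 0"
  shows "2 * normal_tail \<sigma> t + min (t / \<sigma>) 1 / 5 \<le> 1"
proof -
  let ?N = "density lborel (normal_density 0 \<sigma>)"
  interpret N: prob_space ?N
    using assms(1) by (rule prob_space_normal_density)
  have "{..-t} \<union> {-t<..<t} \<union> {t..} = space ?N"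
    by auto
  then have "1 = measure ?N ({..-t} \<union> {-t<..<t} \<union> {t..})"
    using N.prob_space by simp
  also have "\<dots> = measure ?N ({..-t} \<union> {-t<..<t}) + measure ?N {t..}"
    by (rule N.finite_measure_Union) (use assms(2) in auto)
  also have "measure ?N ({..-t} \<union> {-t<..<t}) = measure ?N {..-t} + measure ?N {-t<..<t}"
    by (rule N.finite_measure_Union) auto
  finally have "measure ?N {..-t} + measure ?N {-t<..<t} + measure ?N {t..} = 1" ..
  then show ?thesis
    using measure_normal_center_ge[OF assms] measure_normal_lower_tail[of \<sigma> t]
    by (simp add: normal_tail_def)
qed

section \<open>A single noisy comparison\<close>

lemma exp_two_point_mean_le:
  fixes u R :: real
  assumes "0 \<le> u" "u \<le> 1/2" "0 \<le> R"
  shows "exp (-u) * (1 - R) + exp u * R \<le> exp (- u * (1 - 2 * R) + 4 * u\<^sup>2 * R)"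
proof -
  have "exp (2 * u) - 1 \<le> 2 * u + 4 * u\<^sup>2"
    using exp_bound[of "2 * u"] assms by (simp add: power2_eq_square)
  have "exp (-u) * (1 - R) + exp u * R = exp (-u) * (1 + R * (exp (2 * u) - 1))"
    by (simp add: algebra_simps mult_exp_exp)
  also have "\<dots> \<le> exp (-u) * (1 + R * (2 * u + 4 * u\<^sup>2))"
    using \<open>exp (2 * u) - 1 \<le> 2 * u + 4 * u\<^sup>2\<close> assms(3) by (intro mult_left_mono add_left_mono) auto
  also have "\<dots> \<le> exp (-u) * exp (R * (2 * u + 4 * u\<^sup>2))"
    by (intro mult_left_mono) (auto simp: exp_ge_add_one_self)
  also have "\<dots> = exp (- u * (1 - 2 * R) + 4 * u\<^sup>2 * R)"
    by (simp add: mult_exp_exp algebra_simps)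
  finally show ?thesis .
qed

lemma (in prob_space) nn_integral_exp_two_valued_le:
  assumes "W \<in> events" "prob W \<le> R" "0 \<le> u" "u \<le> 1/2"
  shows "(\<integral>\<^sup>+\<omega>. ennreal (exp (if \<omega> \<in> W then u else -u)) \<partial>M)
    \<le> ennreal (exp (- u * (1 - 2 * R) + 4 * u\<^sup>2 * R))"
proof -
  have "(\<integral>\<^sup>+\<omega>. ennreal (exp (if \<omega> \<in> W then u else -u)) \<partial>M)
      = (\<integral>\<^sup>+\<omega>. ennreal (exp u) * indicator W \<omega> + ennreal (exp (-u)) * indicator (space M - W) \<omega> \<partial>M)"
    by (intro nn_integral_cong) (auto split: split_indicator)
  also have "\<dots> = ennreal (exp u) * emeasure M W + ennreal (exp (-u)) * emeasure M (space M - W)"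
    using assms(1) by (subst nn_integral_add) (auto simp: nn_integral_cmult_indicator)
  also have "\<dots> = ennreal (exp u * prob W + exp (-u) * (1 - prob W))"
    using assms(1) by (simp add: emeasure_eq_measure prob_compl
        ennreal_mult[symmetric] ennreal_plus[symmetric] del: ennreal_plus)
  also have "\<dots> \<le> ennreal (exp (-u) * (1 - R) + exp u * R)"
  proof (intro ennreal_leI)
    have "exp (-u) \<le> exp u"
      using assms by simp
    then have "prob W * (exp u - exp (-u)) \<le> R * (exp u - exp (-u))"
      using assms(2) by (intro mult_right_mono) auto
    then show "exp u * prob W + exp (-u) * (1 - prob W) \<le> exp (-u) * (1 - R) + exp u * R"
      by (simp add: algebra_simps)
  qed
  also have "\<dots> \<le> ennreal (exp (- u * (1 - 2 * R) + 4 * u\<^sup>2 * R))"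
    using assms order_trans[OF measure_nonneg assms(2)] by (intro ennreal_leI exp_two_point_mean_le) auto
  finally show ?thesis .
qed

text \<open>The event \<open>(- d < Z) = (d < 0)\<close> says that \<open>d + Z\<close> and \<open>d\<close> have opposite signs,
  the value \<open>d + Z = 0\<close> counting as negative.\<close>

lemma (in prob_space) prob_normal_wrong_sign_le:
  assumes Z: "distributed M lborel Z (normal_density 0 \<sigma>)" and "d \<noteq> 0"
  shows "prob {\<omega> \<in> space M. (- d < Z \<omega>) = (d < 0)} \<le> normal_tail \<sigma> \<bar>d\<bar>"
proof -
  have Z_meas: "Z \<in> borel_measurable M"
    using distributed_measurable[OF Z] by simp
  have prob_Z: "prob (Z -` A \<inter> space M) = measure (density lborel (normal_density 0 \<sigma>)) A"
    if "A \<in> sets borel" for A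
  proof -
    have "prob (Z -` A \<inter> space M) = measure (distr M lborel Z) A"
      using Z_meas that by (simp add: measure_distr)
    then show ?thesis
      using Z by (simp add: distributed_def)
  qed
  show ?thesis
  proof (cases "d > 0")
    case True
    have "{\<omega> \<in> space M. (- d < Z \<omega>) = (d < 0)} = Z -` {..-\<bar>d\<bar>} \<inter> space M"
      using True by auto
    then show ?thesis
      by (simp add: prob_Z measure_normal_lower_tail)
  next
    case False
    then have "{\<omega> \<in> space M. (- d < Z \<omega>) = (d < 0)} \<subseteq> Z -` {\<bar>d\<bar>..} \<inter> space M"
      using assms(2) by auto
    then have "prob {\<omega> \<in> space M. (- d < Z \<omega>) = (d < 0)} \<le> prob (Z -` {\<bar>d\<bar>..} \<inter> space M)"
      using Z_meas by (intro finite_measure_mono) auto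
    then show ?thesis
      by (simp add: prob_Z normal_tail_def)
  qed
qed

lemma (in prob_space) nn_integral_exp_normal_sign_le:
  assumes Z: "distributed M lborel Z (normal_density 0 \<sigma>)" and "\<sigma> > 0"
    and "0 \<le> \<eta>" "0 \<le> a" "\<eta> * a * \<bar>d\<bar> \<le> 1/2"
  shows "(\<integral>\<^sup>+\<omega>. ennreal (exp (\<eta> * ((if - d < Z \<omega> then 1 else -1) * (- a * d)))) \<partial>M)
    \<le> ennreal (exp (- \<eta> * a * \<bar>d\<bar> * min (\<bar>d\<bar> / \<sigma>) 1 / 5 + 4 * \<eta>\<^sup>2 * a\<^sup>2 * \<sigma>\<^sup>2))"
proof (cases "d = 0")
  case True
  then show ?thesis
    using emeasure_space_1 by (simp add: ennreal_leI)
next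
  case False
  define t where "t = \<bar>d\<bar>"
  define u where "u = \<eta> * a * t"
  define W where "W = {\<omega> \<in> space M. (- d < Z \<omega>) = (d < 0)}"
  define R where "R = normal_tail \<sigma> t"
  have t: "t > 0"
    using False by (simp add: t_def)
  have "W \<in> events"
    using distributed_measurable[OF Z] by (simp add: W_def)
  have "(\<integral>\<^sup>+\<omega>. ennreal (exp (\<eta> * ((if - d < Z \<omega> then 1 else -1) * (- a * d)))) \<partial>M)
      = (\<integral>\<^sup>+\<omega>. ennreal (exp (if \<omega> \<in> W then u else -u)) \<partial>M)"
    by (intro nn_integral_cong) (auto simp: W_def u_def t_def abs_if)
  also have "\<dots> \<le> ennreal (exp (- u * (1 - 2 * R) + 4 * u\<^sup>2 * R))"
    using assms \<open>W \<in> events\<close> prob_normal_wrong_sign_le[OF Z False]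
    by (intro nn_integral_exp_two_valued_le) (auto simp: W_def R_def t_def u_def)
  also have "\<dots> \<le> ennreal (exp (- u * (min (t / \<sigma>) 1 / 5) + 4 * u\<^sup>2 * (\<sigma>\<^sup>2 / t\<^sup>2)))"
  proof -
    have "u * (min (t / \<sigma>) 1 / 5) \<le> u * (1 - 2 * R)"
      using normal_tail_twice_add_center_le[OF \<open>\<sigma> > 0\<close> t] assms(3,4) t
      by (intro mult_left_mono) (auto simp: R_def u_def)
    moreover have "4 * u\<^sup>2 * R \<le> 4 * u\<^sup>2 * (\<sigma>\<^sup>2 / t\<^sup>2)"
      using normal_tail_le[OF \<open>\<sigma> > 0\<close> t] unfolding R_def by (intro mult_left_mono) auto
    ultimately show ?thesis
      by (intro ennreal_leI) simp
  qed
  also have "\<dots> = ennreal (exp (- \<eta> * a * \<bar>d\<bar> * min (\<bar>d\<bar> / \<sigma>) 1 / 5 + 4 * \<eta>\<^sup>2 * a\<^sup>2 * \<sigma>\<^sup>2))"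
    using t by (simp add: u_def t_def power_mult_distrib)
  finally show ?thesis .
qed

lemma (in pair_prob_space) distr_pair_snd: "distr (M1 \<Otimes>\<^sub>M M2) M2 snd = M2"
proof (intro measure_eqI)
  fix A assume A: "A \<in> sets (distr (M1 \<Otimes>\<^sub>M M2) M2 snd)"
  then have "emeasure (distr (M1 \<Otimes>\<^sub>M M2) M2 snd) A = emeasure (M1 \<Otimes>\<^sub>M M2) (space M1 \<times> A)"
    by (auto simp: emeasure_distr space_pair_measure dest: sets.sets_into_space
        intro!: arg_cong2[where f = emeasure])
  with A show "emeasure (distr (M1 \<Otimes>\<^sub>M M2) M2 snd) A = emeasure M2 A"
    by (simp add: M2.emeasure_pair_measure_Times M1.emeasure_space_1)
qed simp

lemma indep_var_fst_snd:
  assumes "prob_space M" "prob_space N"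
  shows "prob_space.indep_var (M \<Otimes>\<^sub>M N) M fst N snd"
proof -
  interpret pair_prob_space M N
    using assms by (simp add: pair_prob_space_def pair_sigma_finite_def prob_space_imp_sigma_finite)
  have "(\<lambda>x. (fst x, snd x)) = id"
    by auto
  then show ?thesis
    by (simp add: indep_var_distribution_eq M2.distr_pair_fst distr_pair_snd distr_id[unfolded id_def, symmetric])
qed

lemma distributed_fst_pair_density:
  assumes "prob_space (density lborel f)" "prob_space N" "f \<in> borel_measurable lborel"
  shows "distributed (density lborel f \<Otimes>\<^sub>M N) lborel fst f"
proof -
  have "distr (density lborel f \<Otimes>\<^sub>M N) lborel fst = distr (density lborel f \<Otimes>\<^sub>M N) (density lborel f) fst"
    by (rule distr_cong) auto
  also have "\<dots> = density lborel f"
    using assms(2) by (rule prob_space.distr_pair_fst)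
  finally show ?thesis
    using assms(3) by (auto simp: distributed_def measurable_cong_sets[OF refl sets_density]
        intro: measurable_fst'')
qed

lemma distributed_snd_pair_density:
  assumes "prob_space M" "prob_space (density lborel g)" "g \<in> borel_measurable lborel"
  shows "distributed (M \<Otimes>\<^sub>M density lborel g) lborel snd g"
proof -
  interpret pair_prob_space M "density lborel g"
    using assms by (simp add: pair_prob_space_def pair_sigma_finite_def prob_space_imp_sigma_finite)
  have "distr (M \<Otimes>\<^sub>M density lborel g) lborel snd = distr (M \<Otimes>\<^sub>M density lborel g) (density lborel g) snd"
    by (rule distr_cong) auto
  also have "\<dots> = density lborel g"
    by (rule distr_pair_snd)
  finally show ?thesis
    using assms(3) by (auto simp: distributed_def)
qed

lemma normal_pair_scaled_diff_distributed:
  fixes s c \<mu>\<^sub>a \<mu>\<^sub>b :: real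
  assumes "s > 0" "c > 0"
  defines "P \<equiv> density lborel (normal_density \<mu>\<^sub>a s) \<Otimes>\<^sub>M density lborel (normal_density \<mu>\<^sub>b s)"
  shows "distributed P lborel (\<lambda>p. c * (fst p - \<mu>\<^sub>a) - (snd p - \<mu>\<^sub>b))
    (normal_density 0 (sqrt ((c * s)\<^sup>2 + s\<^sup>2)))"
proof -
  have prob_a: "prob_space (density lborel (normal_density \<mu>\<^sub>a s))"
    and prob_b: "prob_space (density lborel (normal_density \<mu>\<^sub>b s))"
    using assms(1) by (auto intro: prob_space_normal_density)
  interpret pair_prob_space "density lborel (normal_density \<mu>\<^sub>a s)" "density lborel (normal_density \<mu>\<^sub>b s)"
    using prob_a prob_b by (simp add: pair_prob_space_def pair_sigma_finite_def prob_space_imp_sigma_finite)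
  have "indep_var borel ((\<lambda>x. c * (x - \<mu>\<^sub>a)) \<circ> fst) borel ((\<lambda>y. y - \<mu>\<^sub>b) \<circ> snd)"
    by (rule indep_var_compose[OF indep_var_fst_snd[OF prob_a prob_b]]) auto
  moreover have "distributed P lborel (\<lambda>p. - c * \<mu>\<^sub>a + c * fst p) (normal_density (- c * \<mu>\<^sub>a + c * \<mu>\<^sub>a) (\<bar>c\<bar> * s))"
    unfolding P_def using assms(1,2)
    by (intro normal_density_affine distributed_fst_pair_density prob_a prob_b) auto
  moreover have "distributed P lborel (\<lambda>p. - \<mu>\<^sub>b + 1 * snd p) (normal_density (- \<mu>\<^sub>b + 1 * \<mu>\<^sub>b) (\<bar>1\<bar> * s))"
    unfolding P_def using assms(1)
    by (intro normal_density_affine distributed_snd_pair_density prob_a prob_b) auto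
  ultimately have "distributed P lborel (\<lambda>p. c * (fst p - \<mu>\<^sub>a) - (snd p - \<mu>\<^sub>b))
      (normal_density (0 - 0) (sqrt ((c * s)\<^sup>2 + s\<^sup>2)))"
    using assms(1,2) unfolding P_def
    by (intro diff_indep_normal) (auto simp: o_def algebra_simps)
  then show ?thesis
    by simp
qed

lemma sqrt_mult_sq_add_sq_bounds:
  fixes s c :: real
  assumes "s > 0" "c > 0"
  shows "sqrt ((c * s)\<^sup>2 + s\<^sup>2) \<le> (1 + c) * s" "(1 + c) * s \<le> 2 * sqrt ((c * s)\<^sup>2 + s\<^sup>2)"
proof -
  have "(c * s)\<^sup>2 + s\<^sup>2 \<le> ((1 + c) * s)\<^sup>2"
    using assms by (simp add: power2_eq_square algebra_simps)
  then show "sqrt ((c * s)\<^sup>2 + s\<^sup>2) \<le> (1 + c) * s"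
    using assms by (intro real_le_lsqrt) auto
  have "4 * ((c * s)\<^sup>2 + s\<^sup>2) - ((1 + c) * s)\<^sup>2 = ((c - 1) * s)\<^sup>2 + 2 * (c * s)\<^sup>2 + 2 * s\<^sup>2"
    by (simp add: power2_eq_square algebra_simps)
  moreover have "0 \<le> ((c - 1) * s)\<^sup>2 + 2 * (c * s)\<^sup>2 + 2 * s\<^sup>2"
    by simp
  ultimately have "((1 + c) * s)\<^sup>2 \<le> 4 * ((c * s)\<^sup>2 + s\<^sup>2)"
    by linarith
  also have "\<dots> = (2 * sqrt ((c * s)\<^sup>2 + s\<^sup>2))\<^sup>2"
    by (simp add: power_mult_distrib)
  finally show "(1 + c) * s \<le> 2 * sqrt ((c * s)\<^sup>2 + s\<^sup>2)"
    by (rule power2_le_imp_le) simp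
qed

lemma nn_integral_exp_pair_normal_sign_le:
  fixes s c \<eta> \<mu>\<^sub>a \<mu>\<^sub>b :: real
  assumes "s > 0" "c > 0" "0 \<le> \<eta>" "\<eta> \<le> 1/2" "\<bar>c * \<mu>\<^sub>a - \<mu>\<^sub>b\<bar> \<le> 1 + c"
  defines "d \<equiv> c * \<mu>\<^sub>a - \<mu>\<^sub>b"
  shows "(\<integral>\<^sup>+p. ennreal (exp (\<eta> * ((if c * fst p > snd p then 1 else -1) * ((\<mu>\<^sub>b - c * \<mu>\<^sub>a) / (1 + c)))))
      \<partial>(density lborel (normal_density \<mu>\<^sub>a s) \<Otimes>\<^sub>M density lborel (normal_density \<mu>\<^sub>b s)))
    \<le> ennreal (exp (- \<eta> * \<bar>d\<bar> * min (\<bar>d\<bar> / sqrt ((c * s)\<^sup>2 + s\<^sup>2)) 1 / (5 * (1 + c)) + 4 * \<eta>\<^sup>2 * s\<^sup>2))"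
proof -
  let ?P = "density lborel (normal_density \<mu>\<^sub>a s) \<Otimes>\<^sub>M density lborel (normal_density \<mu>\<^sub>b s)"
  define \<sigma> where "\<sigma> = sqrt ((c * s)\<^sup>2 + s\<^sup>2)"
  define a where "a = 1 / (1 + c)"
  interpret prob_space ?P
    using assms(1) by (intro prob_space_pair prob_space_normal_density)
  have "\<sigma> > 0"
    using assms(1) by (simp add: \<sigma>_def add_nonneg_pos)
  have "a * \<bar>d\<bar> \<le> 1"
    using assms(2,5) by (simp add: a_def d_def)
  then have "\<eta> * (a * \<bar>d\<bar>) \<le> 1/2 * 1"
    using assms(2,3,4) by (intro mult_mono) (auto simp: a_def)
  have "a * \<sigma> \<le> s"
    using sqrt_mult_sq_add_sq_bounds(1)[OF assms(1,2)] assms(2) by (simp add: a_def \<sigma>_def field_simps)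
  then have "a\<^sup>2 * \<sigma>\<^sup>2 \<le> s\<^sup>2"
    using \<open>\<sigma> > 0\<close> assms(2) by (simp add: a_def power_mult_distrib[symmetric] power_mono)
  have Z: "distributed ?P lborel (\<lambda>p. c * (fst p - \<mu>\<^sub>a) - (snd p - \<mu>\<^sub>b)) (normal_density 0 \<sigma>)"
    unfolding \<sigma>_def using assms(1,2) by (rule normal_pair_scaled_diff_distributed)
  have "(\<integral>\<^sup>+p. ennreal (exp (\<eta> * ((if c * fst p > snd p then 1 else -1) * ((\<mu>\<^sub>b - c * \<mu>\<^sub>a) / (1 + c))))) \<partial>?P)
      = (\<integral>\<^sup>+p. ennreal (exp (\<eta> * ((if - d < c * (fst p - \<mu>\<^sub>a) - (snd p - \<mu>\<^sub>b) then 1 else -1) * (- a * d)))) \<partial>?P)"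
    using assms(2) by (intro nn_integral_cong) (simp add: a_def d_def field_simps)
  also have "\<dots> \<le> ennreal (exp (- \<eta> * a * \<bar>d\<bar> * min (\<bar>d\<bar> / \<sigma>) 1 / 5 + 4 * \<eta>\<^sup>2 * a\<^sup>2 * \<sigma>\<^sup>2))"
    using \<open>\<eta> * (a * \<bar>d\<bar>) \<le> 1/2 * 1\<close> assms(2)
    by (intro nn_integral_exp_normal_sign_le[OF Z \<open>\<sigma> > 0\<close> assms(3)]) (auto simp: a_def)
  also have "\<dots> \<le> ennreal (exp (- \<eta> * a * \<bar>d\<bar> * min (\<bar>d\<bar> / \<sigma>) 1 / 5 + 4 * \<eta>\<^sup>2 * s\<^sup>2))"
    using \<open>a\<^sup>2 * \<sigma>\<^sup>2 \<le> s\<^sup>2\<close> by (intro ennreal_leI) (simp add: mult.assoc mult_left_mono)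
  finally show ?thesis
    by (simp add: a_def \<sigma>_def algebra_simps)
qed

section \<open>Chernoff bound over all items\<close>

lemma measurable_pair_PiM_component:
  assumes "i \<in> I" "f \<in> measurable (Ma i \<Otimes>\<^sub>M Mb i) N"
  shows "(\<lambda>v. f (fst v i, snd v i)) \<in> measurable (Pi\<^sub>M I Ma \<Otimes>\<^sub>M Pi\<^sub>M I Mb) N"
  using assms(1) by (intro measurable_compose[OF _ assms(2)] measurable_Pair
      measurable_compose[OF measurable_fst measurable_component_singleton]
      measurable_compose[OF measurable_snd measurable_component_singleton])

lemma nn_integral_pair_PiM_prod:
  fixes h :: "'i \<Rightarrow> 'a \<times> 'b \<Rightarrow> ennreal"
  assumes I: "finite I" and "\<And>i. prob_space (Ma i)" "\<And>i. prob_space (Mb i)"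
    and h: "\<And>i. i \<in> I \<Longrightarrow> h i \<in> borel_measurable (Ma i \<Otimes>\<^sub>M Mb i)"
  shows "(\<integral>\<^sup>+v. (\<Prod>i\<in>I. h i (fst v i, snd v i)) \<partial>(Pi\<^sub>M I Ma \<Otimes>\<^sub>M Pi\<^sub>M I Mb))
       = (\<Prod>i\<in>I. \<integral>\<^sup>+p. h i p \<partial>(Ma i \<Otimes>\<^sub>M Mb i))"
proof -
  interpret A: product_prob_space Ma
    using assms(2) by (simp add: product_prob_space_def product_prob_space_axioms_def
        product_sigma_finite_def prob_space_imp_sigma_finite)
  interpret B: product_prob_space Mb
    using assms(3) by (simp add: product_prob_space_def product_prob_space_axioms_def
        product_sigma_finite_def prob_space_imp_sigma_finite)
  have sf_B: "sigma_finite_measure (Pi\<^sub>M I Mb)" "\<And>i. sigma_finite_measure (Mb i)"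
    using prob_space_PiM[of I Mb] assms(3) by (simp_all add: prob_space_imp_sigma_finite)
  have "(\<lambda>v. \<Prod>i\<in>I. h i (fst v i, snd v i)) \<in> borel_measurable (Pi\<^sub>M I Ma \<Otimes>\<^sub>M Pi\<^sub>M I Mb)"
    by (intro borel_measurable_prod_ennreal measurable_pair_PiM_component h)
  from sigma_finite_measure.nn_integral_fst[OF sf_B(1) this]
  have "(\<integral>\<^sup>+v. (\<Prod>i\<in>I. h i (fst v i, snd v i)) \<partial>(Pi\<^sub>M I Ma \<Otimes>\<^sub>M Pi\<^sub>M I Mb))
      = (\<integral>\<^sup>+a. \<integral>\<^sup>+b. (\<Prod>i\<in>I. h i (a i, b i)) \<partial>Pi\<^sub>M I Mb \<partial>Pi\<^sub>M I Ma)"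
    by simp
  also have "\<dots> = (\<integral>\<^sup>+a. (\<Prod>i\<in>I. \<integral>\<^sup>+y. h i (a i, y) \<partial>Mb i) \<partial>Pi\<^sub>M I Ma)"
  proof (intro nn_integral_cong B.product_nn_integral_prod[OF I])
    fix a i assume "a \<in> space (Pi\<^sub>M I Ma)" "i \<in> I"
    then show "(\<lambda>y. h i (a i, y)) \<in> borel_measurable (Mb i)"
      by (intro measurable_compose[OF measurable_Pair1' h]) (auto simp: space_PiM)
  qed
  also have "\<dots> = (\<Prod>i\<in>I. \<integral>\<^sup>+x. (\<integral>\<^sup>+y. h i (x, y) \<partial>Mb i) \<partial>Ma i)"
    using sigma_finite_measure.borel_measurable_nn_integral_fst[OF sf_B(2) h]
    by (rule A.product_nn_integral_prod[OF I])
  also have "\<dots> = (\<Prod>i\<in>I. \<integral>\<^sup>+p. h i p \<partial>(Ma i \<Otimes>\<^sub>M Mb i))"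
    by (intro prod.cong refl sigma_finite_measure.nn_integral_fst[OF sf_B(2) h])
  finally show ?thesis .
qed

lemma emeasure_sum_gt_le_prod_nn_integral_exp:
  fixes X :: "'i \<Rightarrow> 'a \<times> 'b \<Rightarrow> real"
  assumes I: "finite I" and "\<And>i. prob_space (Ma i)" "\<And>i. prob_space (Mb i)"
    and X: "\<And>i. i \<in> I \<Longrightarrow> X i \<in> borel_measurable (Ma i \<Otimes>\<^sub>M Mb i)" and "0 \<le> \<eta>"
  defines "\<Omega> \<equiv> Pi\<^sub>M I Ma \<Otimes>\<^sub>M Pi\<^sub>M I Mb"
  shows "emeasure \<Omega> {v \<in> space \<Omega>. T < (\<Sum>i\<in>I. X i (fst v i, snd v i))}
    \<le> ennreal (exp (- \<eta> * T)) * (\<Prod>i\<in>I. \<integral>\<^sup>+p. ennreal (exp (\<eta> * X i p)) \<partial>(Ma i \<Otimes>\<^sub>M Mb i))"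
proof -
  define F where "F v = (\<Sum>i\<in>I. X i (fst v i, snd v i))" for v
  have F: "F \<in> borel_measurable \<Omega>"
    unfolding F_def \<Omega>_def by (intro borel_measurable_sum measurable_pair_PiM_component X)
  have "emeasure \<Omega> {v \<in> space \<Omega>. T < F v} = (\<integral>\<^sup>+v. indicator {v \<in> space \<Omega>. T < F v} v \<partial>\<Omega>)"
    using F by simp
  also have "\<dots> \<le> (\<integral>\<^sup>+v. ennreal (exp (- \<eta> * T)) * (\<Prod>i\<in>I. ennreal (exp (\<eta> * X i (fst v i, snd v i)))) \<partial>\<Omega>)"
  proof (intro nn_integral_mono)
    fix v
    have "indicator {v \<in> space \<Omega>. T < F v} v \<le> ennreal (exp (\<eta> * (F v - T)))"
      using assms(5) by (auto split: split_indicator)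
    also have "exp (\<eta> * (F v - T)) = exp (- \<eta> * T) * (\<Prod>i\<in>I. exp (\<eta> * X i (fst v i, snd v i)))"
      by (simp add: F_def sum_distrib_left exp_sum[OF I, symmetric] mult_exp_exp algebra_simps)
    also have "ennreal \<dots> = ennreal (exp (- \<eta> * T)) * (\<Prod>i\<in>I. ennreal (exp (\<eta> * X i (fst v i, snd v i))))"
      by (simp add: prod_ennreal ennreal_mult prod_nonneg)
    finally show "indicator {v \<in> space \<Omega>. T < F v} v \<le> \<dots>" .
  qed
  also have "\<dots> = ennreal (exp (- \<eta> * T)) * (\<integral>\<^sup>+v. (\<Prod>i\<in>I. ennreal (exp (\<eta> * X i (fst v i, snd v i)))) \<partial>\<Omega>)"
    unfolding \<Omega>_def
    by (intro nn_integral_cmult borel_measurable_prod_ennreal measurable_pair_PiM_component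
        measurable_compose[OF X]) auto
  also have "\<dots> = ennreal (exp (- \<eta> * T)) * (\<Prod>i\<in>I. \<integral>\<^sup>+p. ennreal (exp (\<eta> * X i p)) \<partial>(Ma i \<Otimes>\<^sub>M Mb i))"
    unfolding \<Omega>_def using X by (subst nn_integral_pair_PiM_prod[OF I assms(2,3)]) auto
  finally show ?thesis
    by (simp add: F_def)
qed

text \<open>\<open>2 \<theta> t - \<theta>\<^sup>2 \<sigma>\<close> is the tangent of \<open>t\<^sup>2 / \<sigma>\<close> at \<open>t = \<theta> \<sigma>\<close>.\<close>

lemma mul_min_ge_tangent:
  fixes t \<sigma> \<theta> :: real
  assumes "0 \<le> t" "\<sigma> > 0" "0 \<le> \<theta>" "\<theta> \<le> 1/2"
  shows "2 * \<theta> * t - \<theta>\<^sup>2 * \<sigma> \<le> t * min (t / \<sigma>) 1"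
proof (cases "t \<le> \<sigma>")
  case True
  have "0 \<le> (t - \<theta> * \<sigma>)\<^sup>2 / \<sigma>"
    using assms(2) by simp
  also have "\<dots> = t * (t / \<sigma>) - (2 * \<theta> * t - \<theta>\<^sup>2 * \<sigma>)"
    using assms(2) by (simp add: power2_eq_square field_simps)
  finally show ?thesis
    using True assms(2) by (simp add: min_def)
next
  case False
  have "\<theta> * t \<le> 1/2 * t"
    using assms by (intro mult_right_mono) auto
  moreover have "0 \<le> \<theta>\<^sup>2 * \<sigma>"
    using assms(2) by simp
  moreover have "min (t / \<sigma>) 1 = 1"
    using False assms(2) by simp
  ultimately show ?thesis
    by (simp only:)
qed

lemma sum_mul_min_ge:
  fixes t :: "'i \<Rightarrow> real" and \<sigma> S :: real
  assumes "finite I" "\<sigma> > 0" "\<And>i. i \<in> I \<Longrightarrow> 0 \<le> t i" "0 \<le> S" "S \<le> (\<Sum>i\<in>I. t i)"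
    and "2 * S \<le> card I * \<sigma>"
  shows "S\<^sup>2 / (card I * \<sigma>) \<le> (\<Sum>i\<in>I. t i * min (t i / \<sigma>) 1)"
proof (cases "I = {}")
  case True
  then show ?thesis
    by simp
next
  case False
  define n where "n = real (card I)"
  define \<theta> where "\<theta> = S / (n * \<sigma>)"
  have n: "n > 0"
    using assms(1) False by (simp add: n_def card_gt_0_iff)
  have \<theta>: "0 \<le> \<theta>" "\<theta> \<le> 1/2"
    using n assms(2,4,6) by (simp_all add: \<theta>_def n_def field_simps)
  have "S\<^sup>2 / (n * \<sigma>) = 2 * \<theta> * S - n * \<theta>\<^sup>2 * \<sigma>"
    using n assms(2) by (simp add: \<theta>_def power2_eq_square field_simps)
  also have "\<dots> \<le> 2 * \<theta> * (\<Sum>i\<in>I. t i) - n * \<theta>\<^sup>2 * \<sigma>"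
    using \<theta> assms(5) by (simp add: mult_left_mono)
  also have "\<dots> = (\<Sum>i\<in>I. 2 * \<theta> * t i - \<theta>\<^sup>2 * \<sigma>)"
    by (simp add: n_def sum_subtractf sum_distrib_left)
  also have "\<dots> \<le> (\<Sum>i\<in>I. t i * min (t i / \<sigma>) 1)"
    using assms(2,3) \<theta> by (intro sum_mono mul_min_ge_tangent) auto
  finally show ?thesis
    by (simp add: n_def)
qed

lemma sum_abs_mul_min_ge:
  fixes d :: "nat \<Rightarrow> real" and s c \<Delta> :: real
  assumes "s > 0" "c > 0" "(1 + c) * \<Delta> \<le> (\<Sum>i<m. \<bar>d i\<bar>)" "0 \<le> \<Delta>" "4 * \<Delta> \<le> m * s"
  shows "\<Delta>\<^sup>2 / (m * s) \<le> (\<Sum>i<m. \<bar>d i\<bar> * min (\<bar>d i\<bar> / sqrt ((c * s)\<^sup>2 + s\<^sup>2)) 1) / (1 + c)"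
proof -
  define \<sigma> where "\<sigma> = sqrt ((c * s)\<^sup>2 + s\<^sup>2)"
  have \<sigma>: "\<sigma> > 0" "\<sigma> \<le> (1 + c) * s" "(1 + c) * s \<le> 2 * \<sigma>"
    using assms(1,2) sqrt_mult_sq_add_sq_bounds[OF assms(1,2)] by (simp_all add: \<sigma>_def add_pos_nonneg)
  have "2 * ((1 + c) * \<Delta>) \<le> (1 + c) * (m * s) / 2"
    using assms(2,5) by (simp add: mult_left_mono)
  also have "\<dots> \<le> m * \<sigma>"
    using mult_left_mono[OF \<sigma>(3), of "real m"] by (simp add: algebra_simps)
  finally have "((1 + c) * \<Delta>)\<^sup>2 / (m * \<sigma>) \<le> (\<Sum>i<m. \<bar>d i\<bar> * min (\<bar>d i\<bar> / \<sigma>) 1)"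
    using sum_mul_min_ge[of "{..<m}" \<sigma> "\<lambda>i. \<bar>d i\<bar>" "(1 + c) * \<Delta>"] \<sigma>(1) assms(2,3,4) by simp
  then have "(1 + c) * \<Delta>\<^sup>2 / (m * \<sigma>) \<le> (\<Sum>i<m. \<bar>d i\<bar> * min (\<bar>d i\<bar> / \<sigma>) 1) / (1 + c)"
    using assms(2) by (simp add: power_mult_distrib power2_eq_square field_simps)
  moreover have "\<Delta>\<^sup>2 / (m * s) \<le> (1 + c) * \<Delta>\<^sup>2 / (m * \<sigma>)"
  proof (cases "m = 0")
    case False
    have "m * (\<sigma> / (1 + c)) \<le> m * s"
      using \<sigma>(2) assms(2) by (intro mult_left_mono) (auto simp: field_simps)
    then have "\<Delta>\<^sup>2 / (m * s) \<le> \<Delta>\<^sup>2 / (m * (\<sigma> / (1 + c)))"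
      using False \<sigma>(1) assms(1,2) by (intro divide_left_mono) (auto intro!: mult_pos_pos)
    then show ?thesis
      using assms(2) by (simp add: field_simps)
  qed simp
  ultimately show ?thesis
    unfolding \<sigma>_def by linarith
qed

lemma f_c_eq_sum_sign:
  assumes "c > 0"
  shows "f_c m ua ub c va vb
    = (\<Sum>i<m. (if c * va i > vb i then 1 else -1) * ((ub i - c * ua i) / (1 + c)))"
proof -
  have "f_c m ua ub c va vb = (\<Sum>i<m. xsel c va vb i * (ub i - c * ua i)) / (1 + c)"
    unfolding f_c_def e_a_def e_b_def
    by (simp add: sum_distrib_left sum_subtractf[symmetric] algebra_simps)
  then show ?thesis
    by (simp add: xsel_def sum_divide_distrib)
qed

lemma abs_mult_diff_le:
  fixes a b c :: real
  assumes "a \<in> {0..1}" "b \<in> {0..1}" "c > 0"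
  shows "\<bar>c * a - b\<bar> \<le> 1 + c"
proof -
  have "c * a \<le> c * 1" "0 \<le> c * a"
    using assms by (auto intro: mult_left_mono)
  then show ?thesis
    using assms(2) by (auto simp: abs_le_iff)
qed

lemma emeasure_f_c_gt_le_exp_sum:
  fixes ua ub :: "nat \<Rightarrow> real" and s c \<eta> T :: real
  assumes "s > 0" "c > 0" "\<forall>i<m. ua i \<in> {0..1} \<and> ub i \<in> {0..1}" "0 \<le> \<eta>" "\<eta> \<le> 1/2"
  defines "\<Omega> \<equiv> (\<Pi>\<^sub>M i\<in>{..<m}. density lborel (normal_density (ua i) s)) \<Otimes>\<^sub>M
                 (\<Pi>\<^sub>M i\<in>{..<m}. density lborel (normal_density (ub i) s))"
    and "d \<equiv> \<lambda>i. c * ua i - ub i" and "\<sigma> \<equiv> sqrt ((c * s)\<^sup>2 + s\<^sup>2)"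
  shows "emeasure \<Omega> {v \<in> space \<Omega>. T < f_c m ua ub c (fst v) (snd v)}
    \<le> ennreal (exp (- \<eta> * T - \<eta> / 5 * ((\<Sum>i<m. \<bar>d i\<bar> * min (\<bar>d i\<bar> / \<sigma>) 1) / (1 + c))
      + 4 * \<eta>\<^sup>2 * m * s\<^sup>2))"
proof -
  define X where "X i p = (if c * fst p > snd p then 1 else -1) * ((ub i - c * ua i) / (1 + c))"
    for i and p :: "real \<times> real"
  let ?N = "\<lambda>\<mu>. density lborel (normal_density \<mu> s)"
  have "X i \<in> borel_measurable (borel \<Otimes>\<^sub>M borel)" for i
    unfolding X_def by measurable
  then have X_meas: "X i \<in> borel_measurable (?N (ua i) \<Otimes>\<^sub>M ?N (ub i))" for i
    by (simp add: measurable_cong_sets[OF sets_pair_measure_cong[OF sets_density sets_density] refl]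
        measurable_cong_sets[OF sets_pair_measure_cong[OF sets_lborel sets_lborel] refl])
  have "{v \<in> space \<Omega>. T < f_c m ua ub c (fst v) (snd v)}
      = {v \<in> space \<Omega>. T < (\<Sum>i<m. X i (fst v i, snd v i))}"
    using assms(2) by (simp add: f_c_eq_sum_sign X_def)
  also have "emeasure \<Omega> \<dots> \<le> ennreal (exp (- \<eta> * T)) *
      (\<Prod>i<m. \<integral>\<^sup>+p. ennreal (exp (\<eta> * X i p)) \<partial>(?N (ua i) \<Otimes>\<^sub>M ?N (ub i)))"
    unfolding \<Omega>_def using assms(1,4) X_meas
    by (intro emeasure_sum_gt_le_prod_nn_integral_exp prob_space_normal_density) auto
  also have "\<dots> \<le> ennreal (exp (- \<eta> * T)) *
      (\<Prod>i<m. ennreal (exp (- \<eta> * \<bar>d i\<bar> * min (\<bar>d i\<bar> / \<sigma>) 1 / (5 * (1 + c)) + 4 * \<eta>\<^sup>2 * s\<^sup>2)))"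
  proof (intro mult_left_mono prod_mono_ennreal)
    fix i assume "i \<in> {..<m}"
    then have "\<bar>c * ua i - ub i\<bar> \<le> 1 + c"
      using assms(2,3) by (intro abs_mult_diff_le) auto
    then show "(\<integral>\<^sup>+p. ennreal (exp (\<eta> * X i p)) \<partial>(?N (ua i) \<Otimes>\<^sub>M ?N (ub i)))
        \<le> ennreal (exp (- \<eta> * \<bar>d i\<bar> * min (\<bar>d i\<bar> / \<sigma>) 1 / (5 * (1 + c)) + 4 * \<eta>\<^sup>2 * s\<^sup>2))"
      unfolding X_def d_def \<sigma>_def by (intro nn_integral_exp_pair_normal_sign_le assms(1,2,4,5))
  qed simp
  also have "\<dots> = ennreal (exp (- \<eta> * T - \<eta> / 5 * ((\<Sum>i<m. \<bar>d i\<bar> * min (\<bar>d i\<bar> / \<sigma>) 1) / (1 + c))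
      + 4 * \<eta>\<^sup>2 * m * s\<^sup>2))"
    by (simp add: prod_ennreal ennreal_mult[symmetric] exp_sum[symmetric] mult_exp_exp
        sum.distrib sum_subtractf sum_divide_distrib[symmetric] sum_distrib_left[symmetric] algebra_simps)
  finally show ?thesis .
qed

lemma emeasure_f_c_gt_le:
  fixes ua ub :: "nat \<Rightarrow> real" and s c \<Delta> \<eta> T :: real
  assumes "s > 0" "c > 0" "\<forall>i<m. ua i \<in> {0..1} \<and> ub i \<in> {0..1}"
    and "(1 + c) * \<Delta> \<le> (\<Sum>i<m. \<bar>c * ua i - ub i\<bar>)" "0 \<le> \<Delta>" "4 * \<Delta> \<le> m * s"
    and "0 \<le> \<eta>" "\<eta> \<le> 1/2"
  defines "\<Omega> \<equiv> (\<Pi>\<^sub>M i\<in>{..<m}. density lborel (normal_density (ua i) s)) \<Otimes>\<^sub>M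
                 (\<Pi>\<^sub>M i\<in>{..<m}. density lborel (normal_density (ub i) s))"
  shows "emeasure \<Omega> {v \<in> space \<Omega>. T < f_c m ua ub c (fst v) (snd v)}
    \<le> ennreal (exp (- \<eta> * T - \<eta> * \<Delta>\<^sup>2 / (5 * m * s) + 4 * \<eta>\<^sup>2 * m * s\<^sup>2))"
proof -
  let ?S = "(\<Sum>i<m. \<bar>c * ua i - ub i\<bar> * min (\<bar>c * ua i - ub i\<bar> / sqrt ((c * s)\<^sup>2 + s\<^sup>2)) 1) / (1 + c)"
  have "\<Delta>\<^sup>2 / (real m * s) \<le> ?S"
    using assms(1,2,4,5,6) by (rule sum_abs_mul_min_ge)
  then have "\<eta> / 5 * (\<Delta>\<^sup>2 / (real m * s)) \<le> \<eta> / 5 * ?S"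
    using assms(7) by (intro mult_left_mono) auto
  then have "exp (- \<eta> * T - \<eta> / 5 * ?S + 4 * \<eta>\<^sup>2 * m * s\<^sup>2)
      \<le> exp (- \<eta> * T - \<eta> * \<Delta>\<^sup>2 / (5 * real m * s) + 4 * \<eta>\<^sup>2 * m * s\<^sup>2)"
    by (simp add: mult.commute)
  then show ?thesis
    unfolding \<Omega>_def using assms(1,2,3,7,8)
    by (intro order.trans[OF emeasure_f_c_gt_le_exp_sum] ennreal_leI) auto
qed

section \<open>Choice of the parameters\<close>

lemma envy_le_imp_sum_abs_ge:
  fixes ua ub :: "nat \<Rightarrow> real" and c \<Delta> :: real
  assumes "A \<subseteq> {..<m}" "envy m ua ub A \<le> - \<Delta>" "c > 0"
  shows "(1 + c) * \<Delta> \<le> (\<Sum>i<m. \<bar>c * ua i - ub i\<bar>)"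
proof -
  define B where "B = {..<m} - A"
  have split: "(\<Sum>i<m. f i) = (\<Sum>i\<in>B. f i) + (\<Sum>i\<in>A. f i)" for f :: "nat \<Rightarrow> real"
    unfolding B_def using assms(1) by (intro sum.subset_diff) auto
  have "c * \<Delta> \<le> c * ((\<Sum>i\<in>A. ua i) - (\<Sum>i\<in>B. ua i))"
    using assms(2,3) by (intro mult_left_mono) (auto simp: envy_def envy_ab_def B_def)
  moreover have "\<Delta> \<le> (\<Sum>i\<in>B. ub i) - (\<Sum>i\<in>A. ub i)"
    using assms(2) by (simp add: envy_def envy_ba_def B_def)
  ultimately have "(1 + c) * \<Delta> \<le> (\<Sum>i\<in>A. c * ua i - ub i) - (\<Sum>i\<in>B. c * ua i - ub i)"
    by (simp add: sum_subtractf sum_distrib_left algebra_simps)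
  also have "\<dots> = (\<Sum>i<m. (if i \<in> A then 1 else -1) * (c * ua i - ub i))"
    by (simp add: split B_def sum_negf[symmetric])
  also have "\<dots> \<le> (\<Sum>i<m. \<bar>c * ua i - ub i\<bar>)"
    by (intro sum_mono) auto
  finally show ?thesis .
qed

lemma powr_three_halves:
  fixes x :: real
  assumes "0 \<le> x"
  shows "x powr (3/2) = x * sqrt x"
proof -
  have "x powr (3/2) = x powr (1 + 1/2)"
    by simp
  also have "\<dots> = x powr 1 * x powr (1/2)"
    by (rule powr_add)
  also have "\<dots> = x * sqrt x"
    using assms by (simp add: powr_half_sqrt)
  finally show ?thesis .
qed

lemma powr_neg_three_halves:
  fixes x :: real
  assumes "x > 0"
  shows "x powr (-3/2) = 1 / (x * sqrt x)"
proof -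
  have "x powr (-3/2) = x powr (- (3/2))"
    by simp
  also have "\<dots> = inverse (x powr (3/2))"
    by (rule powr_minus)
  also have "\<dots> = 1 / (x * sqrt x)"
    using assms by (simp add: powr_three_halves inverse_eq_divide)
  finally show ?thesis .
qed

lemma power2_powr_one_quarter:
  fixes x :: real
  assumes "0 \<le> x"
  shows "(x powr (1/4))\<^sup>2 = sqrt x"
proof -
  have "(x powr (1/4))\<^sup>2 = x powr (1/4 + 1/4)"
    by (simp only: power2_eq_square powr_add)
  also have "\<dots> = sqrt x"
    using assms by (simp add: powr_half_sqrt)
  finally show ?thesis .
qed

lemma num_queries_pos:
  assumes "m \<ge> 2"
  shows "num_queries m \<Delta> > 0"
proof -
  have "ln (real m) > 0"
    using assms by simp
  then have "0 < 15 * real m powr (3/2) / \<Delta>\<^sup>2 * ln (real m) + (ln (real m))\<^sup>2"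
    by (intro add_nonneg_pos) auto
  then show ?thesis
    using assms by (simp add: num_queries_def)
qed

lemma num_queries_le:
  assumes "m \<ge> 1"
  shows "real (num_queries m \<Delta>) \<le> m * (15 * real m powr (3/2) / \<Delta>\<^sup>2 * ln m + (ln m)\<^sup>2 + 1)"
proof -
  have "0 \<le> 15 * real m powr (3/2) / \<Delta>\<^sup>2 * ln m + (ln m)\<^sup>2"
    using assms by simp
  then show ?thesis
    by (simp add: num_queries_def of_nat_nat mult_left_mono of_int_ceiling_le_add_one)
qed

lemma gap_le_noise_sd:
  fixes M Q L \<Delta> :: real
  assumes "M > 0" "Q > 0" "L \<ge> 1" "\<Delta> > 0" "\<Delta> \<le> M / (8 * L)" "480 * (M * sqrt M) * L \<le> M\<^sup>2"
    and "Q \<le> M * (15 * (M * sqrt M) / \<Delta>\<^sup>2 * L + L\<^sup>2 + 1)"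
  shows "4 * \<Delta> \<le> M * sqrt (M / Q)"
proof -
  have "\<Delta> * L \<le> M / 8" "\<Delta> \<le> M / 8"
    using assms(1,3,4,5) order_trans[OF assms(5) divide_left_mono[of 8 "8 * L" M]]
    by (auto simp: field_simps)
  then have "(\<Delta> * L)\<^sup>2 \<le> (M / 8)\<^sup>2" "\<Delta>\<^sup>2 \<le> (M / 8)\<^sup>2"
    using assms(3,4) by (auto intro!: power_mono)
  define X where "X = 15 * (M * sqrt M) / \<Delta>\<^sup>2 * L + L\<^sup>2"
  have "16 * \<Delta>\<^sup>2 * (X + 1) = 240 * (M * sqrt M) * L + 16 * (\<Delta> * L)\<^sup>2 + 16 * \<Delta>\<^sup>2"
    using assms(4) by (simp add: X_def power2_eq_square field_simps)
  also have "\<dots> \<le> M\<^sup>2"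
    using assms(6) calculation \<open>(\<Delta> * L)\<^sup>2 \<le> (M / 8)\<^sup>2\<close> \<open>\<Delta>\<^sup>2 \<le> (M / 8)\<^sup>2\<close>
    by (simp add: power2_eq_square)
  finally have "16 * \<Delta>\<^sup>2 * (X + 1) \<le> M\<^sup>2" .
  have "16 * \<Delta>\<^sup>2 * Q \<le> 16 * \<Delta>\<^sup>2 * (M * (X + 1))"
    using assms(7) by (intro mult_left_mono) (auto simp: X_def)
  also have "\<dots> = M * (16 * \<Delta>\<^sup>2 * (X + 1))"
    by (simp add: algebra_simps)
  also have "\<dots> \<le> M * M\<^sup>2"
    using \<open>16 * \<Delta>\<^sup>2 * (X + 1) \<le> M\<^sup>2\<close> assms(1) by (intro mult_left_mono) auto
  finally have "16 * \<Delta>\<^sup>2 * Q \<le> M * M\<^sup>2" .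
  then have "(4 * \<Delta>)\<^sup>2 \<le> (M * sqrt (M / Q))\<^sup>2"
    using assms(1,2) by (simp add: power_mult_distrib power2_eq_square field_simps)
  then show ?thesis
    by (rule power2_le_imp_le) (use assms(1,2) in simp)
qed

lemma ln_le_noise_sd:
  fixes M Q L \<Delta> :: real
  assumes "M > 0" "Q > 0" "L \<ge> 1" "sqrt M * L ^ 4 \<le> \<Delta>\<^sup>2" "L ^ 4 + L\<^sup>2 \<le> M"
    and "Q \<le> M * (15 * (M * sqrt M) / \<Delta>\<^sup>2 * L + L\<^sup>2 + 1)"
  shows "L \<le> 4 * sqrt M * sqrt (M / Q)"
proof -
  have pos: "sqrt M * L ^ 4 > 0"
    using assms(1,3) by simp
  have "15 * (M * sqrt M) / \<Delta>\<^sup>2 * L * L\<^sup>2 = 15 * (M * sqrt M) * L ^ 3 / \<Delta>\<^sup>2"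
    by (simp add: power2_eq_square power3_eq_cube)
  also have "\<dots> \<le> 15 * (M * sqrt M) * L ^ 3 / (sqrt M * L ^ 4)"
    using pos assms(1,3,4) order_less_le_trans[OF pos assms(4)]
    by (intro divide_left_mono mult_pos_pos) auto
  also have "\<dots> = 15 * M / L"
    using pos by (simp add: power2_eq_square power3_eq_cube power4_eq_xxxx field_simps)
  also have "\<dots> \<le> 15 * M"
    using assms(1,3) by (simp add: field_simps)
  finally have "(15 * (M * sqrt M) / \<Delta>\<^sup>2 * L + L\<^sup>2 + 1) * L\<^sup>2 \<le> 16 * M"
    using assms(5) by (simp add: power2_eq_square power4_eq_xxxx algebra_simps)
  have "Q * L\<^sup>2 \<le> M * (15 * (M * sqrt M) / \<Delta>\<^sup>2 * L + L\<^sup>2 + 1) * L\<^sup>2"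
    using assms(6) by (intro mult_right_mono) auto
  also have "\<dots> \<le> M * (16 * M)"
    using \<open>(15 * (M * sqrt M) / \<Delta>\<^sup>2 * L + L\<^sup>2 + 1) * L\<^sup>2 \<le> 16 * M\<close> assms(1)
    by (simp add: mult.assoc mult_left_mono)
  finally have "Q * L\<^sup>2 \<le> 16 * M\<^sup>2"
    by (simp add: power2_eq_square)
  then have "L\<^sup>2 \<le> 16 * M * (M / Q)"
    using assms(2) by (simp add: power2_eq_square field_simps)
  also have "\<dots> = (4 * sqrt M * sqrt (M / Q))\<^sup>2"
    using assms(1,2) by (simp add: power_mult_distrib)
  finally have "L\<^sup>2 \<le> (4 * sqrt M * sqrt (M / Q))\<^sup>2" .
  then show ?thesis
    by (rule power2_le_imp_le) (use assms(1,2) in simp)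
qed

lemma chernoff_exponent_eq:
  fixes M Q L \<Delta> :: real
  assumes "M > 0" "Q > 0"
  defines "s \<equiv> sqrt (M / Q)"
  defines "\<eta> \<equiv> L / (8 * sqrt M * s)"
  shows "- \<eta> * (- (1/5) * (1 / (M * sqrt M)) * sqrt Q * \<Delta>\<^sup>2 + M / sqrt Q * L)
      - \<eta> * \<Delta>\<^sup>2 / (5 * M * s) + 4 * \<eta>\<^sup>2 * M * s\<^sup>2 = - L\<^sup>2 / 16"
proof -
  obtain r q where "r > 0" "q > 0" "M = r\<^sup>2" "Q = q\<^sup>2"
    using assms(1,2) by (metis real_sqrt_gt_0_iff real_sqrt_pow2 less_eq_real_def)
  moreover have s: "s = r / q"
    using calculation by (simp add: s_def real_sqrt_divide)
  ultimately show ?thesis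
    unfolding \<eta>_def s by (simp add: power2_eq_square field_simps)
qed

lemma num_queries_noise_bounds:
  fixes \<Delta> :: real
  assumes "m \<ge> 2" "1 \<le> ln (real m)"
    and "480 * (m * sqrt m) * ln m \<le> (real m)\<^sup>2" "ln (real m) ^ 4 + (ln (real m))\<^sup>2 \<le> m"
    and "real m powr (1/4) * (ln (real m))\<^sup>2 \<le> \<Delta>" "\<Delta> \<le> m / (8 * ln m)"
  defines "s \<equiv> sqrt (real m / real (num_queries m \<Delta>))"
  shows "\<Delta> > 0" "4 * \<Delta> \<le> m * s" "ln m \<le> 4 * sqrt m * s"
proof -
  define L where "L = ln (real m)"
  have m: "real m > 0"
    using assms(1) by simp
  have Q: "real (num_queries m \<Delta>) > 0"
    "real (num_queries m \<Delta>) \<le> m * (15 * (m * sqrt m) / \<Delta>\<^sup>2 * L + L\<^sup>2 + 1)"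
    using num_queries_pos[OF assms(1)] num_queries_le[of m \<Delta>] assms(1)
    by (simp_all add: L_def powr_three_halves)
  have pos: "0 < real m powr (1/4) * L\<^sup>2"
    using m assms(2) by (intro mult_pos_pos) (auto simp: L_def)
  then show "\<Delta> > 0"
    using assms(5) by (simp add: L_def)
  then show "4 * \<Delta> \<le> m * s"
    unfolding s_def using m Q assms(2,3,6) by (intro gap_le_noise_sd) (auto simp: L_def)
  have "(real m powr (1/4) * L\<^sup>2)\<^sup>2 \<le> \<Delta>\<^sup>2"
    using pos assms(5) by (intro power_mono) (auto simp: L_def)
  then have "sqrt m * L ^ 4 \<le> \<Delta>\<^sup>2"
    using m by (simp add: power_mult_distrib power2_powr_one_quarter flip: power_mult)
  then show "ln m \<le> 4 * sqrt m * s"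
    unfolding s_def using m Q assms(2,4) by (intro ln_le_noise_sd) (auto simp: L_def)
qed

lemma prob_space_obs_measure:
  assumes "num_queries m D > 0"
  shows "prob_space (obs_measure m D ua ub)"
proof -
  have "m > 0"
    using assms by (auto simp: num_queries_def)
  then show ?thesis
    unfolding obs_measure_def Let_def using assms
    by (intro prob_space_pair prob_space_PiM prob_space_normal_density) auto
qed

lemma measure_f_c_gt_le:
  fixes ua ub :: "nat \<Rightarrow> real" and c \<Delta> :: real
  assumes "m \<ge> 2" "c > 0" "1 \<le> ln (real m)"
    and "480 * (m * sqrt m) * ln m \<le> (real m)\<^sup>2" "ln (real m) ^ 4 + (ln (real m))\<^sup>2 \<le> m"
    and "real m powr (1/4) * (ln (real m))\<^sup>2 \<le> \<Delta>" "\<Delta> \<le> m / (8 * ln m)"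
    and "\<forall>i<m. ua i \<in> {0..1} \<and> ub i \<in> {0..1}" "A \<subseteq> {..<m}" "envy m ua ub A \<le> - \<Delta>"
  shows "measure (obs_measure m \<Delta> ua ub)
      {v \<in> space (obs_measure m \<Delta> ua ub).
        f_c m ua ub c (fst v) (snd v) >
          - (1/5) * real m powr (-3/2) * sqrt (real (num_queries m \<Delta>)) * \<Delta>\<^sup>2
          + real m / sqrt (real (num_queries m \<Delta>)) * ln (real m)}
    \<le> exp (- (ln (real m))\<^sup>2 / 16)"
proof -
  define L where "L = ln (real m)"
  define Q where "Q = real (num_queries m \<Delta>)"
  define s where "s = sqrt (real m / Q)"
  define \<eta> where "\<eta> = L / (8 * sqrt m * s)"
  define \<Omega> where "\<Omega> = obs_measure m \<Delta> ua ub"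
  have m: "real m > 0" and Q: "Q > 0"
    using assms(1) num_queries_pos[OF assms(1)] by (simp_all add: Q_def)
  interpret prob_space \<Omega>
    unfolding \<Omega>_def using num_queries_pos[OF assms(1)] by (rule prob_space_obs_measure)
  note bounds = num_queries_noise_bounds[OF assms(1,3-7), folded Q_def, folded s_def L_def]
  have \<eta>: "0 \<le> \<eta>" "\<eta> \<le> 1/2"
    using m Q assms(3) bounds(3) by (auto simp: \<eta>_def s_def L_def field_simps)
  have "emeasure \<Omega> {v \<in> space \<Omega>. f_c m ua ub c (fst v) (snd v) >
      - (1/5) * (1 / (m * sqrt m)) * sqrt Q * \<Delta>\<^sup>2 + m / sqrt Q * L}
    \<le> ennreal (exp (- \<eta> * (- (1/5) * (1 / (m * sqrt m)) * sqrt Q * \<Delta>\<^sup>2 + m / sqrt Q * L)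
      - \<eta> * \<Delta>\<^sup>2 / (5 * real m * s) + 4 * \<eta>\<^sup>2 * m * s\<^sup>2))"
    unfolding \<Omega>_def obs_measure_def Let_def Q_def[symmetric] s_def[symmetric]
    using m Q assms(2,8) envy_le_imp_sum_abs_ge[OF assms(9,10,2)] bounds(1,2) \<eta>
    by (intro emeasure_f_c_gt_le) (auto simp: s_def)
  also have "\<dots> = ennreal (exp (- L\<^sup>2 / 16))"
    unfolding \<eta>_def s_def using chernoff_exponent_eq[OF m Q] by simp
  finally show ?thesis
    unfolding \<Omega>_def[symmetric] Q_def[symmetric] L_def[symmetric] powr_neg_three_halves[OF m]
    by (simp add: emeasure_eq_measure)
qed

lemma superpoly_small_exp_neg_ln_sq:
  fixes \<epsilon> :: real
  assumes "\<epsilon> > 0" "eventually (\<lambda>m. g m = exp (- \<epsilon> * (ln (real m))\<^sup>2)) at_top"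
  shows "superpoly_small g"
  unfolding superpoly_small_def
proof
  fix k :: nat
  have "((\<lambda>x::real. exp (real k * ln x - \<epsilon> * (ln x)\<^sup>2)) \<longlongrightarrow> 0) at_top"
    using assms(1) by real_asymp
  then have "(\<lambda>m. exp (real k * ln (real m) - \<epsilon> * (ln (real m))\<^sup>2)) \<longlonglongrightarrow> 0"
    by (rule filterlim_compose[OF _ filterlim_real_sequentially])
  moreover have "eventually (\<lambda>m. exp (real k * ln (real m) - \<epsilon> * (ln (real m))\<^sup>2) = real m ^ k * g m) at_top"
    using assms(2) eventually_gt_at_top[of 0]
  proof eventually_elim
    case (elim m)
    then show ?case
      by (simp add: exp_diff exp_of_nat_mult ln_realpow[symmetric] exp_minus field_simps)
  qed
  ultimately show "(\<lambda>m. real m ^ k * g m) \<longlonglongrightarrow> 0"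
    by (rule Lim_transform_eventually)
qed

lemma eventually_parameter_conditions:
  assumes "D \<in> o(\<lambda>m. real m / ln (real m))"
  shows "eventually (\<lambda>m. D m \<le> m / (8 * ln m) \<and> 1 \<le> ln (real m) \<and>
    480 * (m * sqrt m) * ln m \<le> (real m)\<^sup>2 \<and> ln (real m) ^ 4 + (ln (real m))\<^sup>2 \<le> m) at_top"
proof -
  have "eventually (\<lambda>m. norm (D m) \<le> 1/8 * norm (real m / ln (real m))) at_top"
    using assms by (rule landau_o.smallD) simp
  moreover have "eventually (\<lambda>m::nat. 1 \<le> ln (real m)) at_top"
    and "eventually (\<lambda>m::nat. 480 * (m * sqrt m) * ln m \<le> (real m)\<^sup>2) at_top"
    and "eventually (\<lambda>m::nat. ln (real m) ^ 4 + (ln (real m))\<^sup>2 \<le> m) at_top"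
    by real_asymp+
  ultimately show ?thesis
    by eventually_elim (auto simp: abs_le_iff)
qed

theorem lemma13:
  fixes D :: "nat \<Rightarrow> real" and c :: real
  assumes D_lower: "\<forall>m. D m \<ge> real m powr (1/4) * (ln (real m))\<^sup>2"
    and D_upper: "D \<in> o(\<lambda>m. real m / ln (real m))"
    and c_pos: "c > 0"
  shows "\<exists>g. superpoly_small g \<and>
    (\<forall>m \<ge> 2. \<forall>ua ub :: nat \<Rightarrow> real.
       (\<forall>i<m. ua i \<in> {0..1} \<and> ub i \<in> {0..1}) \<longrightarrow>
       (\<exists>A\<subseteq>{..<m}. envy m ua ub A \<le> - D m) \<longrightarrow>
       measure (obs_measure m (D m) ua ub)
         {v \<in> space (obs_measure m (D m) ua ub).
            f_c m ua ub c (fst v) (snd v) >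
              - (1/5) * real m powr (-3/2) * sqrt (real (num_queries m (D m))) * (D m)\<^sup>2
              + real m / sqrt (real (num_queries m (D m))) * ln (real m)}
       \<le> g m)"
proof -
  obtain N where N: "\<And>m. m \<ge> N \<Longrightarrow> D m \<le> m / (8 * ln m) \<and> 1 \<le> ln (real m) \<and>
      480 * (m * sqrt m) * ln m \<le> (real m)\<^sup>2 \<and> ln (real m) ^ 4 + (ln (real m))\<^sup>2 \<le> m"
    using eventually_parameter_conditions[OF D_upper] by (auto simp: eventually_at_top_linorder)
  define g where "g m = (if m \<ge> N then exp (- (1/16) * (ln (real m))\<^sup>2) else 1)" for m
  have "superpoly_small g"
    by (rule superpoly_small_exp_neg_ln_sq[of "1/16"])
       (auto simp: g_def eventually_at_top_linorder)
  moreover have "measure (obs_measure m (D m) ua ub) {v \<in> space (obs_measure m (D m) ua ub).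
      f_c m ua ub c (fst v) (snd v) >
        - (1/5) * real m powr (-3/2) * sqrt (real (num_queries m (D m))) * (D m)\<^sup>2
        + real m / sqrt (real (num_queries m (D m))) * ln (real m)} \<le> g m"
    if "m \<ge> 2" "\<forall>i<m. ua i \<in> {0..1} \<and> ub i \<in> {0..1}" "A \<subseteq> {..<m}" "envy m ua ub A \<le> - D m"
    for m ua ub A
  proof (cases "m \<ge> N")
    case True
    then show ?thesis
      using measure_f_c_gt_le[OF that(1) c_pos _ _ _ _ _ that(2-4)] N D_lower by (simp add: g_def)
  next
    case False
    interpret prob_space "obs_measure m (D m) ua ub"
      using num_queries_pos[OF that(1)] by (rule prob_space_obs_measure)
    show ?thesis
      using False by (simp add: g_def)
  qed
  ultimately show ?thesis
    by blast
qed

end
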